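(* Let $P \in S$ have degree $n > 0$ in $x$. Then there exist $n$ elements of $S$ that generate $C_S(P)$ as a $K$-algebra.
   Context: Standing conventions: $K$ is a field, $R = K[y]$, $\sigma$ is a $K$-algebra endomorphism of $R$ with $\deg_y(\sigma(y)) > 1$, and $\delta$ is a $K$-linear $\sigma$-derivation of $R$ ($\delta(ab) = \sigma(a)\delta(b) + \delta(a)b$). $S = R[x;\sigma,\delta]$ is the Ore extension (polynomials $\sum r_i x^i$, $r_i\in R$, with $xr = \sigma(r)x + \delta(r)$). $C_S(P)$ is the centralizer of $P$ in $S$. *)

theory Defs
  imports "HOL-Computational_Algebra.Polynomial"
begin

text \<open>Elements of the Ore extension S = R[x;sigma,delta], R = K[y], are represented as
  polynomials in x with coefficients in R, i.e. as terms of type 'a poly poly: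
  the i-th coefficient is the coefficient r_i of x^i in the normal form sum r_i x^i.\<close>

definition K_alg_endo :: "('a::field poly \<Rightarrow> 'a poly) \<Rightarrow> bool" where
  "K_alg_endo \<sigma> \<longleftrightarrow>
     (\<forall>p q. \<sigma> (p + q) = \<sigma> p + \<sigma> q) \<and>
     (\<forall>p q. \<sigma> (p * q) = \<sigma> p * \<sigma> q) \<and>
     (\<forall>c. \<sigma> [:c:] = [:c:])"

definition sigma_derivation :: "('a::field poly \<Rightarrow> 'a poly) \<Rightarrow> ('a poly \<Rightarrow> 'a poly) \<Rightarrow> bool" where
  "sigma_derivation \<sigma> \<delta> \<longleftrightarrow>
     (\<forall>p q. \<delta> (p + q) = \<delta> p + \<delta> q) \<and>
     (\<forall>c p. \<delta> (smult c p) = smult c (\<delta> p)) \<and>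
     (\<forall>p q. \<delta> (p * q) = \<sigma> p * \<delta> q + \<delta> p * q)"

text \<open>Left multiplication by x: x * (sum r_i x^i) = sum (sigma(r_i) x^(i+1) + delta(r_i) x^i).\<close>
definition ore_xmul :: "('a::field poly \<Rightarrow> 'a poly) \<Rightarrow> ('a poly \<Rightarrow> 'a poly) \<Rightarrow> 'a poly poly \<Rightarrow> 'a poly poly" where
  "ore_xmul \<sigma> \<delta> Q = pCons 0 (map_poly \<sigma> Q) + map_poly \<delta> Q"

definition ore_mult :: "('a::field poly \<Rightarrow> 'a poly) \<Rightarrow> ('a poly \<Rightarrow> 'a poly) \<Rightarrow> 'a poly poly \<Rightarrow> 'a poly poly \<Rightarrow> 'a poly poly" where
  "ore_mult \<sigma> \<delta> P Q = (\<Sum>i\<le>degree P. smult (coeff P i) ((ore_xmul \<sigma> \<delta> ^^ i) Q))"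

definition centralizer :: "('a::field poly \<Rightarrow> 'a poly) \<Rightarrow> ('a poly \<Rightarrow> 'a poly) \<Rightarrow> 'a poly poly \<Rightarrow> 'a poly poly set" where
  "centralizer \<sigma> \<delta> P = {Q. ore_mult \<sigma> \<delta> P Q = ore_mult \<sigma> \<delta> Q P}"

text \<open>The K-subalgebra of S generated by a set G (K embedded as constants [:[:c:]:];
  scalar multiplication by c is multiplication by this constant).\<close>
inductive_set alg_gen :: "('a::field poly \<Rightarrow> 'a poly) \<Rightarrow> ('a poly \<Rightarrow> 'a poly) \<Rightarrow> 'a poly poly set \<Rightarrow> 'a poly poly set"
  for \<sigma> \<delta> G where
  const: "[:[:c:]:] \<in> alg_gen \<sigma> \<delta> G"
| gen: "g \<in> G \<Longrightarrow> g \<in> alg_gen \<sigma> \<delta> G"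
| add: "a \<in> alg_gen \<sigma> \<delta> G \<Longrightarrow> b \<in> alg_gen \<sigma> \<delta> G \<Longrightarrow> a + b \<in> alg_gen \<sigma> \<delta> G"
| mult: "a \<in> alg_gen \<sigma> \<delta> G \<Longrightarrow> b \<in> alg_gen \<sigma> \<delta> G \<Longrightarrow> ore_mult \<sigma> \<delta> a b \<in> alg_gen \<sigma> \<delta> G"

end

theory Submission
  imports Defs
begin

text \<open>Multiplication in \<open>S\<close> adds degrees in \<open>x\<close>, the leading coefficient of \<open>A B\<close> being
  \<open>lc(A) \<sigma>\<^sup>a(lc(B))\<close> with \<open>a = deg A\<close>. If \<open>Q\<close> and \<open>T\<close> of equal degree commute with \<open>P\<close> of
  degree \<open>n\<close>, comparing leading terms of \<open>PQ = QP\<close> and \<open>PT = TP\<close> shows that \<open>q = lc(Q)\<close> and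
  \<open>t = lc(T)\<close> satisfy \<open>q(h) t = t(h) q\<close> for \<open>h = \<sigma>\<^sup>n(y)\<close>; as \<open>deg h > 1\<close>, this forces \<open>q\<close> to
  be a scalar multiple of \<open>t\<close>. Hence an element of \<open>C(P)\<close> can be reduced in degree by
  subtracting a scalar multiple of \<open>P\<^sup>k R\<close>, where \<open>R \<in> C(P)\<close> has minimal degree in its residue
  class modulo \<open>n\<close>. So \<open>P\<close> together with one such \<open>R\<close> for each nonzero residue generates \<open>C(P)\<close>.\<close>

locale ore_extension =
  fixes \<sigma> \<delta> :: "'a::field poly \<Rightarrow> 'a poly"
  assumes sigma_endo: "K_alg_endo \<sigma>" and delta_derivation: "sigma_derivation \<sigma> \<delta>"
begin

abbreviation xmul :: "'a poly poly \<Rightarrow> 'a poly poly" where "xmul \<equiv> ore_xmul \<sigma> \<delta>"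
abbreviation omult :: "'a poly poly \<Rightarrow> 'a poly poly \<Rightarrow> 'a poly poly" where "omult \<equiv> ore_mult \<sigma> \<delta>"
abbreviation cent :: "'a poly poly \<Rightarrow> 'a poly poly set" where "cent \<equiv> centralizer \<sigma> \<delta>"
abbreviation gen :: "'a poly poly set \<Rightarrow> 'a poly poly set" where "gen \<equiv> alg_gen \<sigma> \<delta>"

lemma sigma_add: "\<sigma> (p + q) = \<sigma> p + \<sigma> q"
  and sigma_mult: "\<sigma> (p * q) = \<sigma> p * \<sigma> q"
  and sigma_const: "\<sigma> [:c:] = [:c:]"
  using sigma_endo by (simp_all add: K_alg_endo_def)

lemma delta_add: "\<delta> (p + q) = \<delta> p + \<delta> q"
  and delta_smult: "\<delta> (smult c p) = smult c (\<delta> p)"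
  and delta_mult: "\<delta> (p * q) = \<sigma> p * \<delta> q + \<delta> p * q"
  using delta_derivation by (simp_all add: sigma_derivation_def)

lemma sigma_0 [simp]: "\<sigma> 0 = 0"
  using sigma_const[of 0] by simp

lemma delta_const [simp]: "\<delta> [:c:] = 0"
proof -
  have "\<delta> 1 = \<delta> 1 + \<delta> 1"
    using delta_mult[of 1 1] sigma_const[of 1] by (simp flip: one_pCons)
  then have "\<delta> 1 = 0" by (metis add_cancel_right_right)
  then show ?thesis
    using delta_smult[of c 1] by simp
qed

lemma delta_0 [simp]: "\<delta> 0 = 0"
  using delta_const[of 0] by simp

lemma sigma_eq_pcompose: "\<sigma> p = pcompose p (\<sigma> [:0, 1:])"
proof (induction p)
  case (pCons a p)
  have "pCons a p = [:a:] + [:0, 1:] * p"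
    by (simp add: poly_eq_iff coeff_pCons split: nat.split)
  then have "\<sigma> (pCons a p) = [:a:] + \<sigma> [:0, 1:] * \<sigma> p"
    by (metis sigma_add sigma_mult sigma_const)
  then show ?case
    using pCons by (simp add: pcompose_pCons)
qed simp

lemma sigma_funpow_eq_pcompose: "(\<sigma> ^^ k) p = pcompose p ((\<sigma> ^^ k) [:0, 1:])"
proof (induction k arbitrary: p)
  case (Suc k)
  have "(\<sigma> ^^ Suc k) p = \<sigma> (pcompose p ((\<sigma> ^^ k) [:0, 1:]))"
    \<comment> \<open>instantiated: the general IH would also rewrite the \<open>(\<sigma> ^^ k) [:0, 1:]\<close> it produces\<close>
    by (simp only: funpow.simps o_apply Suc.IH[of p])
  also have "\<dots> = pcompose p (pcompose ((\<sigma> ^^ k) [:0, 1:]) (\<sigma> [:0, 1:]))"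
    by (subst sigma_eq_pcompose) (simp add: pcompose_assoc)
  also have "\<dots> = pcompose p ((\<sigma> ^^ Suc k) [:0, 1:])"
    by (simp only: funpow.simps o_apply, subst (2) sigma_eq_pcompose, rule refl)
  finally show ?case .
qed simp

lemma degree_sigma_funpow_y: "degree ((\<sigma> ^^ k) [:0, 1:]) = degree (\<sigma> [:0, 1:]) ^ k"
proof (induction k)
  case (Suc k)
  have "(\<sigma> ^^ Suc k) [:0, 1:] = pcompose ((\<sigma> ^^ k) [:0, 1:]) (\<sigma> [:0, 1:])"
    by (simp only: funpow.simps o_apply, subst sigma_eq_pcompose, rule refl)
  then show ?case
    using Suc by (simp add: degree_pcompose)
qed simp

subsection \<open>The Ore multiplication\<close>

lemma coeff_xmul:
  "coeff (xmul Q) i = (if i = 0 then 0 else \<sigma> (coeff Q (i - 1))) + \<delta> (coeff Q i)"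
  by (simp add: ore_xmul_def coeff_map_poly coeff_pCons split: nat.split)

lemma xmul_add: "xmul (A + B) = xmul A + xmul B"
  by (rule poly_eqI) (simp add: coeff_xmul sigma_add delta_add)

lemma xmul_smult: "xmul (smult a Q) = smult (\<sigma> a) (xmul Q) + smult (\<delta> a) Q"
  by (rule poly_eqI) (simp add: coeff_xmul sigma_mult delta_mult algebra_simps)

lemma xmul_0 [simp]: "xmul 0 = 0"
  by (rule poly_eqI) (simp add: coeff_xmul)

lemma xmul_sum: "xmul (\<Sum>i\<in>I. f i) = (\<Sum>i\<in>I. xmul (f i))"
  by (induction I rule: infinite_finite_induct) (simp_all add: xmul_add)

lemma xmul_funpow_add: "(xmul ^^ i) (A + B) = (xmul ^^ i) A + (xmul ^^ i) B"
  by (induction i) (simp_all add: xmul_add)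

lemma xmul_funpow_0 [simp]: "(xmul ^^ i) 0 = 0"
  by (induction i) simp_all

lemma xmul_funpow_const: "(xmul ^^ i) [:[:c:]:] = monom [:c:] i"
  by (induction i) (auto intro!: poly_eqI simp: coeff_xmul sigma_const monom_0)

lemma ore_mult_bound:
  "degree P \<le> N \<Longrightarrow> omult P Q = (\<Sum>i\<le>N. smult (coeff P i) ((xmul ^^ i) Q))"
  unfolding ore_mult_def by (rule sum.mono_neutral_left) (auto simp: coeff_eq_0)

lemma ore_mult_0_left [simp]: "omult 0 Q = 0"
  and ore_mult_0_right [simp]: "omult P 0 = 0"
  by (simp_all add: ore_mult_def)

lemma ore_mult_add_left: "omult (A + B) Q = omult A Q + omult B Q"
proof -
  let ?N = "max (degree A) (degree B)"
  have "omult (A + B) Q = (\<Sum>i\<le>?N. smult (coeff (A + B) i) ((xmul ^^ i) Q))"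
    by (rule ore_mult_bound) (simp add: degree_add_le)
  then show ?thesis
    by (simp add: ore_mult_bound[of _ ?N] smult_add_left sum.distrib)
qed

lemma ore_mult_add_right: "omult P (A + B) = omult P A + omult P B"
  by (simp add: ore_mult_def xmul_funpow_add smult_add_right sum.distrib)

lemma ore_mult_diff_left: "omult (A - B) Q = omult A Q - omult B Q"
  using ore_mult_add_left[of "A - B" B Q] by (simp add: eq_diff_eq)

lemma ore_mult_diff_right: "omult P (A - B) = omult P A - omult P B"
  using ore_mult_add_right[of P "A - B" B] by (simp add: eq_diff_eq)

lemma ore_mult_smult_left: "omult (smult a A) Q = smult a (omult A Q)"
proof -
  have smult_sum_right: "smult a (\<Sum>i\<in>I. f i) = (\<Sum>i\<in>I. smult a (f i))"
    for I and f :: "nat \<Rightarrow> 'a poly poly"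
    by (induction I rule: infinite_finite_induct) (simp_all add: smult_add_right)
  have "omult (smult a A) Q = (\<Sum>i\<le>degree A. smult (coeff (smult a A) i) ((xmul ^^ i) Q))"
    by (rule ore_mult_bound) simp
  then show ?thesis
    by (simp add: ore_mult_def smult_sum_right)
qed

lemma ore_mult_sum_left: "omult (\<Sum>i\<in>I. f i) Q = (\<Sum>i\<in>I. omult (f i) Q)"
  by (induction I rule: infinite_finite_induct) (simp_all add: ore_mult_add_left)

lemma ore_mult_const_left: "omult [:[:c:]:] Q = smult [:c:] Q"
  by (simp add: ore_mult_def)

lemma ore_mult_const_right: "omult Q [:[:c:]:] = smult [:c:] Q"
proof (rule poly_eqI)
  fix k
  have "coeff (omult Q [:[:c:]:]) k = (\<Sum>i\<le>degree Q. coeff Q i * coeff (monom [:c:] i) k)"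
    by (simp add: ore_mult_def xmul_funpow_const coeff_sum)
  also have "\<dots> = coeff (smult [:c:] Q) k"
    by (cases "k \<le> degree Q") (auto simp: coeff_eq_0 mult.commute if_distrib cong: if_cong)
  finally show "coeff (omult Q [:[:c:]:]) k = coeff (smult [:c:] Q) k" .
qed

lemma ore_mult_pCons_0_left: "omult (pCons 0 A) Q = omult A (xmul Q)"
proof -
  have "omult (pCons 0 A) Q = (\<Sum>i\<le>Suc (degree A). smult (coeff (pCons 0 A) i) ((xmul ^^ i) Q))"
    by (rule ore_mult_bound) (simp add: degree_pCons_le)
  then show ?thesis
    by (simp add: ore_mult_def sum.atMost_Suc_shift funpow_Suc_right del: sum.atMost_Suc funpow.simps)
qed

lemma ore_mult_xmul_left: "omult (xmul A) Q = xmul (omult A Q)"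
proof -
  let ?N = "degree A"
  have "omult (xmul A) Q = omult (map_poly \<sigma> A) (xmul Q) + omult (map_poly \<delta> A) Q"
    by (simp add: ore_xmul_def ore_mult_add_left ore_mult_pCons_0_left)
  also have "\<dots> = (\<Sum>i\<le>?N. smult (\<sigma> (coeff A i)) ((xmul ^^ i) (xmul Q)))
      + (\<Sum>i\<le>?N. smult (\<delta> (coeff A i)) ((xmul ^^ i) Q))"
    by (simp add: ore_mult_bound[of _ ?N] map_poly_degree_leq coeff_map_poly)
  also have "\<dots> = (\<Sum>i\<le>?N. xmul (smult (coeff A i) ((xmul ^^ i) Q)))"
    by (simp add: xmul_smult sum.distrib funpow_swap1)
  also have "\<dots> = xmul (omult A Q)"
    by (simp add: ore_mult_def xmul_sum)
  finally show ?thesis .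
qed

lemma ore_mult_assoc: "omult (omult A B) C = omult A (omult B C)"
proof -
  have xmul_funpow_left: "omult ((xmul ^^ k) B) C = (xmul ^^ k) (omult B C)" for k
    by (induction k) (simp_all add: ore_mult_xmul_left)
  show ?thesis
    by (simp add: ore_mult_def[of \<sigma> \<delta> A B] ore_mult_def[of \<sigma> \<delta> A "omult B C"] ore_mult_sum_left
        ore_mult_smult_left xmul_funpow_left)
qed

lemma degree_xmul_funpow_le: "degree ((xmul ^^ i) Q) \<le> degree Q + i"
  by (induction i) (auto intro!: degree_le simp: coeff_xmul coeff_eq_0)

lemma coeff_xmul_funpow_top: "coeff ((xmul ^^ i) Q) (degree Q + i) = (\<sigma> ^^ i) (lead_coeff Q)"
proof (induction i)
  case (Suc i)
  have "coeff ((xmul ^^ i) Q) (Suc (degree Q + i)) = 0"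
    using degree_xmul_funpow_le[of i Q] by (simp add: coeff_eq_0)
  then show ?case
    using Suc by (simp add: coeff_xmul)
qed simp

lemma coeff_ore_mult: "coeff (omult A B) k = (\<Sum>i\<le>degree A. coeff A i * coeff ((xmul ^^ i) B) k)"
  by (simp add: ore_mult_def coeff_sum)

lemma degree_ore_mult_le: "degree (omult A B) \<le> degree A + degree B"
proof (rule degree_le, intro allI impI)
  fix k assume k: "degree A + degree B < k"
  have "coeff ((xmul ^^ i) B) k = 0" if "i \<le> degree A" for i
    using degree_xmul_funpow_le[of i B] that k by (intro coeff_eq_0) linarith
  then show "coeff (omult A B) k = 0"
    by (simp add: coeff_ore_mult)
qed

lemma coeff_ore_mult_top:
  "coeff (omult A B) (degree A + degree B) = lead_coeff A * (\<sigma> ^^ degree A) (lead_coeff B)"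
proof -
  have lower: "coeff A i * coeff ((xmul ^^ i) B) (degree A + degree B) = 0"
    if "i \<in> {..degree A} - {degree A}" for i
    using degree_xmul_funpow_le[of i B] that by (simp add: coeff_eq_0)
  then have "coeff (omult A B) (degree A + degree B)
      = coeff A (degree A) * coeff ((xmul ^^ degree A) B) (degree A + degree B)"
    unfolding coeff_ore_mult by (subst sum.remove[of _ "degree A"]) (auto intro!: sum.neutral lower)
  then show ?thesis
    using coeff_xmul_funpow_top[of "degree A" B] by (simp add: add.commute)
qed

lemma centralizer_self: "P \<in> cent P"
  and centralizer_const: "[:[:c:]:] \<in> cent P"
  by (simp_all add: centralizer_def ore_mult_const_left ore_mult_const_right)

lemma centralizer_add: "Q \<in> cent P \<Longrightarrow> T \<in> cent P \<Longrightarrow> Q + T \<in> cent P"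
  by (simp add: centralizer_def ore_mult_add_left ore_mult_add_right)

lemma centralizer_diff: "Q \<in> cent P \<Longrightarrow> T \<in> cent P \<Longrightarrow> Q - T \<in> cent P"
  by (simp add: centralizer_def ore_mult_diff_left ore_mult_diff_right)

lemma centralizer_mult: "Q \<in> cent P \<Longrightarrow> T \<in> cent P \<Longrightarrow> omult Q T \<in> cent P"
  unfolding centralizer_def by (simp flip: ore_mult_assoc) (simp add: ore_mult_assoc)

lemma alg_gen_subset_centralizer: "G \<subseteq> cent P \<Longrightarrow> gen G \<subseteq> cent P"
proof
  fix Q assume G: "G \<subseteq> cent P" and "Q \<in> gen G"
  from \<open>Q \<in> gen G\<close> show "Q \<in> cent P"
    by (induction rule: alg_gen.induct)
      (use G in \<open>auto simp: centralizer_const centralizer_add centralizer_mult\<close>)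
qed

lemma one_in_alg_gen: "1 \<in> gen G"
  using alg_gen.const[of 1] by (simp flip: one_pCons)

lemma ore_power_in_alg_gen: "P \<in> gen G \<Longrightarrow> (omult P ^^ k) 1 \<in> gen G"
  by (induction k) (simp_all add: one_in_alg_gen alg_gen.mult)

lemma ore_power_in_centralizer: "(omult P ^^ k) 1 \<in> cent P"
  using centralizer_const[of 1 P]
  by (induction k) (simp_all add: centralizer_mult centralizer_self flip: one_pCons)

end

subsection \<open>Twisted commutation of polynomials in one variable\<close>

lemma degree_eq_of_pcompose_mult_eq:
  fixes h f g :: "'a::field poly"
  assumes "degree h > 1" and "f \<noteq> 0" and "g \<noteq> 0"
    and eq: "pcompose f h * g = pcompose g h * f"
  shows "degree f = degree g"
proof -
  have "pcompose f h \<noteq> 0" and "pcompose g h \<noteq> 0"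
    using assms pcompose_eq_0 by fastforce+
  then have "degree f * degree h + degree g = degree g * degree h + degree f"
    using arg_cong[OF eq, of degree] assms(2,3) by (simp add: degree_mult_eq degree_pcompose)
  then have "int (degree f) * (int (degree h) - 1) = int (degree g) * (int (degree h) - 1)"
    by (simp add: algebra_simps flip: of_nat_mult of_nat_add)
  then show ?thesis
    using assms(1) by simp
qed

lemma smult_of_pcompose_mult_eq:
  fixes h q t :: "'a::field poly"
  assumes h: "degree h > 1" and q: "q \<noteq> 0" and t: "t \<noteq> 0"
    and eq: "pcompose q h * t = pcompose t h * q"
  shows "\<exists>c. q = smult c t"
proof -
  have deg: "degree q = degree t"
    using degree_eq_of_pcompose_mult_eq[OF h q t eq] .
  define r where "r = q - smult (lead_coeff q / lead_coeff t) t"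
  have "coeff r (degree t) = 0"
    using t deg by (simp add: r_def)
  moreover have "pcompose r h * t = pcompose t h * r"
    using eq by (simp add: r_def pcompose_diff pcompose_smult algebra_simps)
  then have "r \<noteq> 0 \<Longrightarrow> degree r = degree t"
    using degree_eq_of_pcompose_mult_eq[OF h _ t] by blast
  ultimately have "r = 0"
    using leading_coeff_0_iff by metis
  then show ?thesis
    unfolding r_def by auto
qed

subsection \<open>Degrees in \<open>S\<close> when \<open>deg \<sigma>(y) > 1\<close>\<close>

locale ore_extension_expanding = ore_extension +
  assumes degree_sigma_y: "degree (\<sigma> [:0, 1:]) > 1"
begin

lemma sigma_funpow_nonzero:
  assumes "a \<noteq> 0"
  shows "(\<sigma> ^^ k) a \<noteq> 0"
proof -
  have "degree ((\<sigma> ^^ k) [:0, 1:]) > 0"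
    using degree_sigma_y by (simp add: degree_sigma_funpow_y)
  then show ?thesis
    using assms pcompose_eq_0 by (metis sigma_funpow_eq_pcompose)
qed

lemma ore_mult_nonzero:
  assumes "A \<noteq> 0" "B \<noteq> 0"
  shows "omult A B \<noteq> 0"
    and degree_ore_mult: "degree (omult A B) = degree A + degree B"
    and lead_coeff_ore_mult: "lead_coeff (omult A B) = lead_coeff A * (\<sigma> ^^ degree A) (lead_coeff B)"
proof -
  have top: "coeff (omult A B) (degree A + degree B) \<noteq> 0"
    using assms sigma_funpow_nonzero by (simp add: coeff_ore_mult_top)
  then show deg: "degree (omult A B) = degree A + degree B"
    using degree_ore_mult_le le_degree antisym by blast
  show "omult A B \<noteq> 0"
    using top by auto
  show "lead_coeff (omult A B) = lead_coeff A * (\<sigma> ^^ degree A) (lead_coeff B)"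
    using deg coeff_ore_mult_top by simp
qed

lemma ore_power_nonzero:
  assumes "P \<noteq> 0"
  shows "(omult P ^^ k) 1 \<noteq> 0 \<and> degree ((omult P ^^ k) 1) = k * degree P"
proof (induction k)
  case (Suc k)
  then have "omult P ((omult P ^^ k) 1) \<noteq> 0"
    and "degree (omult P ((omult P ^^ k) 1)) = degree P + k * degree P"
    using ore_mult_nonzero(1)[OF assms] degree_ore_mult[OF assms] by auto
  then show ?case
    by simp
qed simp

lemma lead_coeff_centralizer_smult:
  assumes "degree P > 0" and "Q \<in> cent P" "Q \<noteq> 0" and "T \<in> cent P" "T \<noteq> 0"
    and "degree Q = degree T"
  shows "\<exists>c. lead_coeff Q = smult c (lead_coeff T)"
proof -
  have P: "P \<noteq> 0"
    using assms(1) by auto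
  let ?h = "(\<sigma> ^^ degree P) [:0, 1:]" and ?s = "(\<sigma> ^^ degree Q) (lead_coeff P)"
  have commute: "lead_coeff P * pcompose (lead_coeff R) ?h = lead_coeff R * ?s"
    if "R \<in> cent P" "R \<noteq> 0" "degree R = degree Q" for R
  proof -
    have "lead_coeff P * (\<sigma> ^^ degree P) (lead_coeff R) = lead_coeff R * ?s"
      using that P lead_coeff_ore_mult[of P R] lead_coeff_ore_mult[of R P]
      by (simp add: centralizer_def)
    then show ?thesis
      by (simp only: sigma_funpow_eq_pcompose[of _ "lead_coeff R"])
  qed
  let ?p = "lead_coeff P" and ?q = "lead_coeff Q" and ?t = "lead_coeff T"
  have "?p * (pcompose ?q ?h * ?t) = (?p * pcompose ?q ?h) * ?t"
    by (simp only: mult.assoc)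
  also have "\<dots> = ?t * ?s * ?q"
    by (simp only: commute[OF assms(2,3) refl] ac_simps)
  also have "\<dots> = (?p * pcompose ?t ?h) * ?q"
    by (simp only: commute[OF assms(4,5) assms(6)[symmetric]])
  also have "\<dots> = ?p * (pcompose ?t ?h * ?q)"
    by (simp only: mult.assoc)
  finally have "pcompose ?q ?h * ?t = pcompose ?t ?h * ?q"
    using P by simp
  moreover have "degree ?h > 1"
    unfolding degree_sigma_funpow_y using one_less_power[OF degree_sigma_y assms(1)] .
  ultimately show ?thesis
    using smult_of_pcompose_mult_eq assms(3,5) leading_coeff_0_iff by metis
qed

subsection \<open>Generators of the centralizer\<close>

lemma exists_centralizer_elem_of_degree:
  assumes P: "degree P = n" "n > 0" "P \<in> gen G"
    and R: "R \<in> cent P" "R \<noteq> 0" "R \<in> gen G"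
    and m: "degree R \<le> m" "degree R mod n = m mod n"
  shows "\<exists>T \<in> cent P \<inter> gen G. T \<noteq> 0 \<and> degree T = m"
proof -
  define k where "k = (m - degree R) div n"
  have "n dvd m - degree R"
    using m mod_eq_dvd_iff_nat[of "degree R" m n] by simp
  then have "k * n + degree R = m"
    using m(1) by (simp add: k_def)
  moreover have "P \<noteq> 0"
    using P(1,2) by auto
  then have "(omult P ^^ k) 1 \<noteq> 0" "degree ((omult P ^^ k) 1) = k * n"
    using ore_power_nonzero[of P k] P(1) by auto
  ultimately have "omult ((omult P ^^ k) 1) R \<noteq> 0" "degree (omult ((omult P ^^ k) 1) R) = m"
    using ore_mult_nonzero(1) degree_ore_mult R(2) by auto
  moreover have "omult ((omult P ^^ k) 1) R \<in> cent P \<inter> gen G"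
    using R P(3) by (simp add: centralizer_mult ore_power_in_centralizer alg_gen.mult ore_power_in_alg_gen)
  ultimately show ?thesis
    by blast
qed

lemma centralizer_subset_alg_gen:
  assumes P: "degree P = n" "n > 0" "P \<in> gen G"
    and reps: "\<And>Q. Q \<in> cent P \<Longrightarrow> Q \<noteq> 0 \<Longrightarrow>
      \<exists>R \<in> cent P \<inter> gen G. R \<noteq> 0 \<and> degree R \<le> degree Q \<and> degree R mod n = degree Q mod n"
  shows "cent P \<subseteq> gen G"
proof
  fix Q assume "Q \<in> cent P"
  then show "Q \<in> gen G"
  proof (induction "degree Q" arbitrary: Q rule: less_induct)
    case less
    show ?case
    proof (cases "Q = 0")
      case True
      then show ?thesis
        using alg_gen.const[of 0] by simp
    next
      case False
      obtain R where R: "R \<in> cent P" "R \<in> gen G" "R \<noteq> 0"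
        "degree R \<le> degree Q" "degree R mod n = degree Q mod n"
        using reps[OF less.prems False] by blast
      obtain T where T: "T \<in> cent P" "T \<in> gen G" "T \<noteq> 0" "degree T = degree Q"
        using exists_centralizer_elem_of_degree[OF P R(1,3,2,4,5)] by blast
      obtain c where c: "lead_coeff Q = smult c (lead_coeff T)"
        using lead_coeff_centralizer_smult[OF _ less.prems False T(1,3)] P T(4) by auto
      define Q' where "Q' = Q - omult [:[:c:]:] T"
      have "Q' \<in> cent P"
        unfolding Q'_def using less.prems T(1) by (simp add: centralizer_diff centralizer_mult centralizer_const)
      moreover have "Q' = 0 \<or> degree Q' < degree Q"
      proof -
        have "coeff Q' (degree Q) = 0" and "degree Q' \<le> degree Q"
          unfolding Q'_def ore_mult_const_left using c T(4)
          by (simp_all add: degree_diff_le)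
        then show ?thesis
          by (metis le_neq_implies_less leading_coeff_0_iff)
      qed
      ultimately have "Q' \<in> gen G"
        using less.hyps alg_gen.const[of 0] by auto
      then have "Q' + omult [:[:c:]:] T \<in> gen G"
        using T(2) by (simp add: alg_gen.add alg_gen.mult alg_gen.const)
      then show ?thesis
        by (simp add: Q'_def)
    qed
  qed
qed

lemma alg_gen_residue_reps_eq_centralizer:
  assumes P: "degree P = n" "n > 0"
    and g_cent: "\<And>r. g r \<in> cent P"
    and g_min: "\<And>r Q. Q \<in> cent P \<Longrightarrow> Q \<noteq> 0 \<Longrightarrow> degree Q mod n = r \<Longrightarrow>
      g r \<noteq> 0 \<and> degree (g r) mod n = r \<and> degree (g r) \<le> degree Q"
  shows "gen (insert P (g ` {1..<n})) = cent P"
proof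
  show "gen (insert P (g ` {1..<n})) \<subseteq> cent P"
    using g_cent centralizer_self by (intro alg_gen_subset_centralizer) auto
  show "cent P \<subseteq> gen (insert P (g ` {1..<n}))"
  proof (rule centralizer_subset_alg_gen[OF P])
    show "P \<in> gen (insert P (g ` {1..<n}))"
      by (simp add: alg_gen.gen)
    fix Q assume Q: "Q \<in> cent P" "Q \<noteq> 0"
    show "\<exists>R \<in> cent P \<inter> gen (insert P (g ` {1..<n})).
      R \<noteq> 0 \<and> degree R \<le> degree Q \<and> degree R mod n = degree Q mod n"
    proof (cases "degree Q mod n = 0")
      case True
      \<comment> \<open>residue \<open>0\<close> is represented by the constant \<open>1\<close>, so needs no generator\<close>
      then show ?thesis
        using centralizer_const[of 1 P] one_in_alg_gen by (intro bexI[of _ 1]) (auto simp flip: one_pCons)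
    next
      case False
      then have "g (degree Q mod n) \<in> gen (insert P (g ` {1..<n}))"
        using P(2) by (auto intro: alg_gen.gen)
      then show ?thesis
        using g_cent g_min[OF Q refl] by blast
    qed
  qed
qed

end

lemma exists_min_degree_mod:
  fixes S :: "'a::zero poly set"
  assumes "S \<noteq> {}"
  shows "\<exists>g. \<forall>r. g r \<in> S \<and> (\<forall>Q\<in>S. Q \<noteq> 0 \<and> degree Q mod n = r \<longrightarrow>
    g r \<noteq> 0 \<and> degree (g r) mod n = r \<and> degree (g r) \<le> degree Q)"
proof -
  have "\<exists>g\<in>S. \<forall>Q\<in>S. Q \<noteq> 0 \<and> degree Q mod n = r \<longrightarrow>
    g \<noteq> 0 \<and> degree g mod n = r \<and> degree g \<le> degree Q" for r
  proof (cases "\<exists>Q\<in>S. Q \<noteq> 0 \<and> degree Q mod n = r")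
    case True
    then show ?thesis
      using ex_has_least_nat[of "\<lambda>Q. Q \<in> S \<and> Q \<noteq> 0 \<and> degree Q mod n = r" _ degree] by blast
  qed (use assms in auto)
  then show ?thesis
    by (intro choice) blast
qed

theorem corollary5p1:
  fixes \<sigma> \<delta> :: "'a::field poly \<Rightarrow> 'a poly" and P :: "'a poly poly" and n :: nat
  assumes "K_alg_endo \<sigma>"
    and "degree (\<sigma> [:0, 1:]) > 1"
    and "sigma_derivation \<sigma> \<delta>"
    and "degree P = n" and "n > 0"
  shows "\<exists>gs :: 'a poly poly list. length gs = n \<and> alg_gen \<sigma> \<delta> (set gs) = centralizer \<sigma> \<delta> P"
proof -
  interpret ore_extension_expanding \<sigma> \<delta>
    using assms(1-3) by unfold_locales
  obtain g where "\<forall>r. g r \<in> cent P \<and> (\<forall>Q\<in>cent P. Q \<noteq> 0 \<and> degree Q mod n = r \<longrightarrow>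
      g r \<noteq> 0 \<and> degree (g r) mod n = r \<and> degree (g r) \<le> degree Q)"
    using exists_min_degree_mod[of "cent P" n] centralizer_self by blast
  then have "gen (insert P (g ` {1..<n})) = cent P"
    using assms(4,5) by (intro alg_gen_residue_reps_eq_centralizer) auto
  moreover have "set (P # map g [1..<n]) = insert P (g ` {1..<n})" "length (P # map g [1..<n]) = n"
    using assms(5) by auto
  ultimately show ?thesis
    by metis
qed

end
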